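(* For every positive integer $n$ there exists an instance of the myopic best-response dynamics described below (a graph with nonnegative embedding weights, features, a linear threshold classifier, and a scaled 2-norm cost) in which exactly one user moves in the first round and this single move triggers a cascade so that in each of the rounds $1,2,\dots,n$ some user moves.
   Context: Users $i$ have features $x_i\in\mathbb{R}^\ell$; embeddings $\phi(x_i;x_{-i})=\widetilde{w}_{ii}x_i+\sum_{j\neq i}\widetilde{w}_{ji}x_j$ with $\widetilde{w}_{ji}\ge0$ (user $j$ influences user $i$ iff $\widetilde{w}_{ji}>0$). Classifier: $h_{\theta,b}(x_i;x_{-i})=\mathrm{sign}(\theta^\top\phi(x_i;x_{-i})+b)$, $\mathrm{sign}(0)=+1$. Cost $c_\beta(x,x')=\beta\|x-x'\|_2$ for some $\beta>0$, so users move at most distance $2/\beta$. Dynamics: $x_i^{(0)}=x_i$; at each round $t\ge1$ all users update concurrently; user $i$ changes her features only if she is currently classified $-1$ and some $x'$ with $h(x';x^{(t-1)}_{-i})=+1$ has $c_\beta(x_i^{(t-1)},x')\le2$, in which case she moves to the minimum-cost such point (embedding exactly on the decision boundary); otherwise she stays. User $i$ "moves at round $t$" if $x_i^{(t)}\neq x_i^{(t-1)}$. *)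

theory Defs
  imports Complex_Main
begin

text \<open>Feature vectors in R^l are represented as functions nat => real whose support
lies in {..<l}. W j i is the weight w~_{ji} (influence of j on i).\<close>

definition supp_in :: "nat \<Rightarrow> (nat \<Rightarrow> real) \<Rightarrow> bool" where
  "supp_in l v \<longleftrightarrow> (\<forall>k\<ge>l. v k = 0)"

definition vnorm :: "nat \<Rightarrow> (nat \<Rightarrow> real) \<Rightarrow> real" where
  "vnorm l v = sqrt (\<Sum>k<l. (v k)\<^sup>2)"

definition cost :: "nat \<Rightarrow> real \<Rightarrow> (nat \<Rightarrow> real) \<Rightarrow> (nat \<Rightarrow> real) \<Rightarrow> real" where
  "cost l \<beta> x x' = \<beta> * vnorm l (\<lambda>k. x k - x' k)"

definition embed :: "nat \<Rightarrow> (nat \<Rightarrow> nat \<Rightarrow> real) \<Rightarrow> (nat \<Rightarrow> nat \<Rightarrow> real) \<Rightarrow> nat \<Rightarrow> (nat \<Rightarrow> real)" where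
  "embed m W X i = (\<lambda>k. \<Sum>j<m. W j i * X j k)"

text \<open>Classifier: True means label +1 (sign(0) = +1), False means -1.\<close>
definition classify :: "nat \<Rightarrow> (nat \<Rightarrow> real) \<Rightarrow> real \<Rightarrow> (nat \<Rightarrow> real) \<Rightarrow> bool" where
  "classify l \<theta> b v \<longleftrightarrow> (\<Sum>k<l. \<theta> k * v k) + b \<ge> 0"

definition feasible ::
  "nat \<Rightarrow> nat \<Rightarrow> (nat \<Rightarrow> nat \<Rightarrow> real) \<Rightarrow> (nat \<Rightarrow> real) \<Rightarrow> real \<Rightarrow> real
   \<Rightarrow> (nat \<Rightarrow> nat \<Rightarrow> real) \<Rightarrow> nat \<Rightarrow> (nat \<Rightarrow> real) set" where
  "feasible l m W \<theta> b \<beta> X i =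
     {x'. supp_in l x' \<and> classify l \<theta> b (embed m W (X(i := x')) i) \<and> cost l \<beta> (X i) x' \<le> 2}"

definition br_step ::
  "nat \<Rightarrow> nat \<Rightarrow> (nat \<Rightarrow> nat \<Rightarrow> real) \<Rightarrow> (nat \<Rightarrow> real) \<Rightarrow> real \<Rightarrow> real
   \<Rightarrow> (nat \<Rightarrow> nat \<Rightarrow> real) \<Rightarrow> (nat \<Rightarrow> nat \<Rightarrow> real) \<Rightarrow> bool" where
  "br_step l m W \<theta> b \<beta> X X' \<longleftrightarrow>
     (\<forall>i<m.
        if \<not> classify l \<theta> b (embed m W X i) \<and> feasible l m W \<theta> b \<beta> X i \<noteq> {}
        then X' i \<in> feasible l m W \<theta> b \<beta> X i \<and>
             (\<forall>y \<in> feasible l m W \<theta> b \<beta> X i. cost l \<beta> (X i) (X' i) \<le> cost l \<beta> (X i) y)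
        else X' i = X i)"

end

theory Submission
  imports Defs
begin

text \<open>Put the users on a directed path \<open>0 \<rightarrow> 1 \<rightarrow> \<dots> \<rightarrow> n\<close>, each weighting herself and her
predecessor by 1, in dimension one with classifier \<open>x \<ge> 0\<close> and cost \<open>\<bar>x - x'\<bar>\<close>, so that
everybody can move by at most 2. All users start at \<open>-2\<close>. The head of the path has
embedding \<open>-2\<close> and can just reach the boundary; every other user has embedding \<open>-4\<close> and
cannot. Once user \<open>i - 1\<close> has moved to 0, the embedding of user \<open>i\<close> rises to \<open>-2\<close> and she
can reach the boundary in the next round: the cascade advances by one user per round.\<close>

lemma br_stepI:
  assumes "\<And>i. i < m \<Longrightarrow>
      (X' i = X i \<and>
         (classify l \<theta> b (embed m W X i) \<or> feasible l m W \<theta> b \<beta> X i = {})) \<or>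
      (\<not> classify l \<theta> b (embed m W X i) \<and> X' i \<in> feasible l m W \<theta> b \<beta> X i \<and>
         (\<forall>y \<in> feasible l m W \<theta> b \<beta> X i. cost l \<beta> (X i) (X' i) \<le> cost l \<beta> (X i) y))"
  shows "br_step l m W \<theta> b \<beta> X X'"
  unfolding br_step_def using assms by auto

lemma classify_one_dim: "classify 1 (\<lambda>_. 1) 0 v \<longleftrightarrow> v 0 \<ge> 0"
  unfolding classify_def by simp

lemma cost_one_dim: "cost 1 \<beta> x y = \<beta> * \<bar>x 0 - y 0\<bar>"
  unfolding cost_def vnorm_def by simp

definition chain_weight :: "nat \<Rightarrow> nat \<Rightarrow> real" where
  "chain_weight j i = (if j = i \<or> Suc j = i then 1 else 0)"

definition cascade_state :: "nat \<Rightarrow> nat \<Rightarrow> nat \<Rightarrow> real" where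
  "cascade_state t i = (\<lambda>k. if k = 0 \<and> t \<le> i then -2 else 0)"

lemma embed_chain_weight:
  assumes "i < m"
  shows "embed m chain_weight Y i 0 = Y i 0 + (if 0 < i then Y (i - 1) 0 else 0)"
proof -
  have "embed m chain_weight Y i 0 =
      (\<Sum>j<m. (if j = i then Y j 0 else 0) + (if Suc j = i then Y j 0 else 0))"
    unfolding embed_def chain_weight_def by (rule sum.cong) auto
  also have "\<dots> = (\<Sum>j<m. if j = i then Y j 0 else 0) +
                  (\<Sum>j<m. if j = i - 1 \<and> 0 < i then Y j 0 else 0)"
    by (simp add: sum.distrib) (rule sum.cong, auto)
  also have "\<dots> = Y i 0 + (if 0 < i then Y (i - 1) 0 else 0)"
    using assms by (cases "0 < i") (auto simp add: sum.delta)
  finally show ?thesis .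
qed

lemma cascade_state_moves_iff: "cascade_state (Suc t) i \<noteq> cascade_state t i \<longleftrightarrow> i = t"
proof
  assume "i = t"
  then have "cascade_state (Suc t) i 0 \<noteq> cascade_state t i 0"
    by (simp add: cascade_state_def)
  then show "cascade_state (Suc t) i \<noteq> cascade_state t i"
    by metis
qed (auto simp: cascade_state_def)

lemma br_step_cascade_state:
  "br_step 1 m chain_weight (\<lambda>_. 1) 0 1 (cascade_state t) (cascade_state (Suc t))"
proof (rule br_stepI)
  fix i assume "i < m"
  let ?X = "cascade_state t" and ?X' = "cascade_state (Suc t)"
  let ?classified = "classify 1 (\<lambda>_. 1) 0 (embed m chain_weight ?X i)"
  let ?F = "feasible 1 m chain_weight (\<lambda>_. 1) 0 1 ?X i"
  have embed: "embed m chain_weight (?X(i := x')) i 0 =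
      x' 0 + (if 0 < i then ?X (i - 1) 0 else 0)" for x'
    using embed_chain_weight[OF \<open>i < m\<close>, of "?X(i := x')"] by auto
  have F: "?F = {x'. supp_in 1 x' \<and> x' 0 + (if 0 < i then ?X (i - 1) 0 else 0) \<ge> 0
                     \<and> \<bar>?X i 0 - x' 0\<bar> \<le> 2}"
    unfolding feasible_def classify_one_dim cost_one_dim embed by simp
  have classified: "?classified \<longleftrightarrow> ?X i 0 + (if 0 < i then ?X (i - 1) 0 else 0) \<ge> 0"
    unfolding classify_one_dim embed_chain_weight[OF \<open>i < m\<close>] ..
  consider "i < t" | "i = t" | "t < i" by linarith
  then show "(?X' i = ?X i \<and> (?classified \<or> ?F = {})) \<or>
      (\<not> ?classified \<and> ?X' i \<in> ?F \<and>
         (\<forall>y \<in> ?F. cost 1 1 (?X i) (?X' i) \<le> cost 1 1 (?X i) y))"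
  proof cases
    case 1
    then show ?thesis
      unfolding classified using cascade_state_moves_iff[of t i] by (auto simp: cascade_state_def)
  next
    case 2
    then show ?thesis
      unfolding classified F cost_one_dim by (auto simp: cascade_state_def supp_in_def)
  next
    case 3
    then show ?thesis
      unfolding F using cascade_state_moves_iff[of t i] by (auto simp: cascade_state_def)
  qed
qed

theorem proposition3:
  fixes n :: nat
  assumes "n > 0"
  shows "\<exists>(l::nat) (m::nat) (W::nat \<Rightarrow> nat \<Rightarrow> real) (\<theta>::nat \<Rightarrow> real) (b::real) (\<beta>::real)
            (X::nat \<Rightarrow> nat \<Rightarrow> nat \<Rightarrow> real).
           l > 0 \<and> \<beta> > 0 \<and> (\<forall>i j. W j i \<ge> 0) \<and>
           (\<forall>i<m. supp_in l (X 0 i)) \<and>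
           (\<forall>t. br_step l m W \<theta> b \<beta> (X t) (X (Suc t))) \<and>
           card {i. i < m \<and> X 1 i \<noteq> X 0 i} = 1 \<and>
           (\<forall>t\<in>{1..n}. \<exists>i<m. X t i \<noteq> X (t - 1) i)"
proof -
  have first_round: "{i. i < Suc n \<and> cascade_state 1 i \<noteq> cascade_state 0 i} = {0}"
    using cascade_state_moves_iff[of 0] by auto
  have later_rounds: "\<exists>i<Suc n. cascade_state t i \<noteq> cascade_state (t - 1) i"
    if "t \<in> {1..n}" for t
    using that cascade_state_moves_iff[of "t - 1" "t - 1"] by (auto intro!: exI[of _ "t - 1"])
  have "\<forall>i j. chain_weight j i \<ge> 0"
    by (simp add: chain_weight_def)
  moreover have "\<forall>i<Suc n. supp_in 1 (cascade_state 0 i)"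
    by (simp add: cascade_state_def supp_in_def)
  ultimately show ?thesis
    using br_step_cascade_state[of "Suc n"] first_round later_rounds
    by (intro exI[of _ 1] exI[of _ "Suc n"] exI[of _ chain_weight] exI[of _ "\<lambda>_. 1"]
        exI[of _ 0] exI[of _ 1] exI[of _ cascade_state]) simp
qed

end
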